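(* Consider a mutation operator on $\{0,1\}^n$ that is either standard bit mutation with mutation probability $p$ satisfying $p=O(1/n)$ and $p\ge n^{-O(1)}$, or the heavy-tailed mutation operator with a constant $\beta>1$, and any fitness function $f$. Then there is a constant $\gamma>1$ such that $p_x^-\le\gamma^{-1}$ for all non-optimal search points $x$. In addition, $p_x^+\ge n^{-O(n)}$ for all non-optimal search points $x$.
   Context: Standard bit mutation with probability $p$ flips each bit independently with probability $p$. Heavy-tailed mutation with $\beta>1$ draws $\chi\in\{1,\dots,n/2\}$ with $\Pr[\chi=i]=i^{-\beta}/\sum_{j=1}^{n/2}j^{-\beta}$ and then performs standard bit mutation with probability $\chi/n$. For a search point $x$, $p_x^+$ (resp. $p_x^-$) is the probability that one application of the mutation operator to $x$ produces a search point of strictly larger (resp. strictly smaller) fitness than $x$. A search point is optimal if it maximises $f$. Asymptotics are with respect to $n\to\infty$. *)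

theory Defs
  imports Complex_Main "HOL-Library.Landau_Symbols"
begin

definition bitstrings :: "nat \<Rightarrow> bool list set" where
  "bitstrings n = {xs. length xs = n}"

definition hamming :: "bool list \<Rightarrow> bool list \<Rightarrow> nat" where
  "hamming x y = card {i. i < length x \<and> x ! i \<noteq> y ! i}"

definition sbm_prob :: "real \<Rightarrow> nat \<Rightarrow> bool list \<Rightarrow> bool list \<Rightarrow> real" where
  "sbm_prob p n x y = p ^ hamming x y * (1 - p) ^ (n - hamming x y)"

definition heavy_prob :: "real \<Rightarrow> nat \<Rightarrow> bool list \<Rightarrow> bool list \<Rightarrow> real" where
  "heavy_prob \<beta> n x y =
     (\<Sum>i = 1..n div 2. (real i powr (-\<beta>) / (\<Sum>j = 1..n div 2. real j powr (-\<beta>)))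
                         * sbm_prob (real i / real n) n x y)"

text \<open>A mutation operator is given by its transition probabilities K n x y.\<close>
definition p_plus :: "(nat \<Rightarrow> bool list \<Rightarrow> bool list \<Rightarrow> real) \<Rightarrow> nat \<Rightarrow> (bool list \<Rightarrow> real) \<Rightarrow> bool list \<Rightarrow> real" where
  "p_plus K n f x = (\<Sum>y \<in> {y \<in> bitstrings n. f y > f x}. K n x y)"

definition p_minus :: "(nat \<Rightarrow> bool list \<Rightarrow> bool list \<Rightarrow> real) \<Rightarrow> nat \<Rightarrow> (bool list \<Rightarrow> real) \<Rightarrow> bool list \<Rightarrow> real" where
  "p_minus K n f x = (\<Sum>y \<in> {y \<in> bitstrings n. f y < f x}. K n x y)"

definition optimal :: "nat \<Rightarrow> (bool list \<Rightarrow> real) \<Rightarrow> bool list \<Rightarrow> bool" where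
  "optimal n f x \<longleftrightarrow> x \<in> bitstrings n \<and> (\<forall>y \<in> bitstrings n. f y \<le> f x)"

end

theory Submission
  imports Defs "HOL-Analysis.Summation_Tests"
begin

text \<open>
  Both operators are Markov kernels on \<open>{0,1}^n\<close> that leave \<open>x\<close> unchanged with probability
  bounded away from 0 and reach every search point with probability at least \<open>n^(-O(n))\<close>.
  For a non-optimal \<open>x\<close> the strictly worse points exclude \<open>x\<close> itself, so \<open>p\<^sub>x\<^sup>-\<close> is at most
  one minus the probability of staying, and some strictly better point exists, so \<open>p\<^sub>x\<^sup>+\<close> is
  at least the minimal transition probability. For standard bit mutation the staying
  probability is \<open>(1 - p)^n \<ge> exp (-2pn)\<close> with \<open>pn = O(1)\<close>; the heavy-tailed operator picks
  \<open>\<chi> = 1\<close> with probability at least \<open>1 / \<zeta>(\<beta>)\<close>, after which it is mutation with rate \<open>1/n\<close>.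
\<close>

lemma bitstrings_Suc:
  "bitstrings (Suc n) = Cons True ` bitstrings n \<union> Cons False ` bitstrings n"
proof
  show "bitstrings (Suc n) \<subseteq> Cons True ` bitstrings n \<union> Cons False ` bitstrings n"
  proof
    fix xs assume "xs \<in> bitstrings (Suc n)"
    then obtain a ys where "xs = a # ys" "length ys = n"
      by (cases xs) (auto simp: bitstrings_def)
    then show "xs \<in> Cons True ` bitstrings n \<union> Cons False ` bitstrings n"
      by (cases a) (auto simp: bitstrings_def)
  qed
qed (auto simp: bitstrings_def)

lemma finite_bitstrings [simp]: "finite (bitstrings n)"
proof (induction n)
  case 0
  have "bitstrings 0 = {[]}" by (auto simp: bitstrings_def)
  then show ?case by simp
qed (simp add: bitstrings_Suc)

lemma hamming_Cons:
  "hamming (a # x) (b # y) = (if a = b then 0 else 1) + hamming x y"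
proof -
  have "{i. i < length (a # x) \<and> (a # x) ! i \<noteq> (b # y) ! i}
        = (if a = b then {} else {0}) \<union> Suc ` {i. i < length x \<and> x ! i \<noteq> y ! i}"
  proof (rule set_eqI)
    fix i
    show "i \<in> {i. i < length (a # x) \<and> (a # x) ! i \<noteq> (b # y) ! i} \<longleftrightarrow>
          i \<in> (if a = b then {} else {0}) \<union> Suc ` {i. i < length x \<and> x ! i \<noteq> y ! i}"
      by (cases i) auto
  qed
  then show ?thesis
    unfolding hamming_def by (simp add: card_image)
qed

lemma hamming_le_length: "hamming x y \<le> length x"
  unfolding hamming_def by (rule card_mono[of "{..<length x}", simplified]) auto

lemma hamming_self [simp]: "hamming x x = 0"
  by (simp add: hamming_def)

subsection \<open>Mutation kernels\<close>

definition mutation_kernel :: "nat \<Rightarrow> (bool list \<Rightarrow> bool list \<Rightarrow> real) \<Rightarrow> bool" where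
  "mutation_kernel n M \<longleftrightarrow>
     (\<forall>x \<in> bitstrings n. (\<forall>y \<in> bitstrings n. 0 \<le> M x y) \<and> (\<Sum>y \<in> bitstrings n. M x y) = 1)"

lemma p_minus_le_one_minus_stay:
  assumes "mutation_kernel n (K n)" and "x \<in> bitstrings n"
  shows "p_minus K n f x \<le> 1 - K n x x"
proof -
  let ?worse = "{y \<in> bitstrings n. f y < f x}"
  have "p_minus K n f x + K n x x = sum (K n x) (insert x ?worse)"
    unfolding p_minus_def by (subst sum.insert) auto
  also have "\<dots> \<le> sum (K n x) (bitstrings n)"
    using assms by (intro sum_mono2) (auto simp: mutation_kernel_def)
  also have "\<dots> = 1"
    using assms by (simp add: mutation_kernel_def)
  finally show ?thesis by simp
qed

lemma p_plus_ge_min_transition: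
  assumes "mutation_kernel n (K n)" and "x \<in> bitstrings n" and "\<not> optimal n f x"
    and "\<forall>y \<in> bitstrings n. L \<le> K n x y"
  shows "L \<le> p_plus K n f x"
proof -
  obtain y where y: "y \<in> bitstrings n" "f x < f y"
    using assms(2,3) unfolding optimal_def by force
  then have "K n x y \<le> p_plus K n f x"
    using assms(1,2) unfolding p_plus_def mutation_kernel_def by (intro member_le_sum) auto
  with y assms(4) show ?thesis by force
qed

lemma mutation_kernel_mixture:
  assumes "finite I" and "\<And>i. i \<in> I \<Longrightarrow> 0 \<le> w i" and "(\<Sum>i \<in> I. w i) = 1"
    and "\<And>i. i \<in> I \<Longrightarrow> mutation_kernel n (M i)"
  shows "mutation_kernel n (\<lambda>x y. \<Sum>i \<in> I. w i * M i x y)"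
  unfolding mutation_kernel_def
proof (intro ballI conjI)
  fix x assume x: "x \<in> bitstrings n"
  show "0 \<le> (\<Sum>i \<in> I. w i * M i x y)" if "y \<in> bitstrings n" for y
    using assms(2,4) x that by (intro sum_nonneg mult_nonneg_nonneg) (auto simp: mutation_kernel_def)
  have "(\<Sum>y \<in> bitstrings n. \<Sum>i \<in> I. w i * M i x y) = (\<Sum>i \<in> I. w i * (\<Sum>y \<in> bitstrings n. M i x y))"
    by (simp add: sum.swap[of _ "bitstrings n"] sum_distrib_left)
  also have "\<dots> = 1"
    using assms(3,4) x by (simp add: mutation_kernel_def)
  finally show "(\<Sum>y \<in> bitstrings n. \<Sum>i \<in> I. w i * M i x y) = 1" .
qed

lemma mixture_ge_component:
  fixes w :: "'i \<Rightarrow> real"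
  assumes "finite I" and "j \<in> I" and "\<And>i. i \<in> I \<Longrightarrow> 0 \<le> w i * M i x y"
  shows "w j * M j x y \<le> (\<Sum>i \<in> I. w i * M i x y)"
  using assms by (intro member_le_sum[where f = "\<lambda>i. w i * M i x y"]) auto

lemma drift_bounds_from_kernel_bounds:
  assumes "0 < c" and "c < 1"
    and "\<forall>\<^sub>F n in at_top. mutation_kernel n (K n) \<and>
           (\<forall>x \<in> bitstrings n. c \<le> K n x x \<and> (\<forall>y \<in> bitstrings n. real n powr (- C * real n) \<le> K n x y))"
  shows "\<exists>\<gamma> > 1. \<exists>C. \<forall>\<^sub>F n in at_top. \<forall>(f :: bool list \<Rightarrow> real) x.
           x \<in> bitstrings n \<and> \<not> optimal n f x \<longrightarrow>
             p_minus K n f x \<le> 1 / \<gamma> \<and> p_plus K n f x \<ge> real n powr (- C * real n)"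
proof (intro exI conjI)
  show "1 < 1 / (1 - c)"
    using assms(1,2) by (simp add: field_simps)
  show "\<forall>\<^sub>F n in at_top. \<forall>(f :: bool list \<Rightarrow> real) x.
          x \<in> bitstrings n \<and> \<not> optimal n f x \<longrightarrow>
            p_minus K n f x \<le> 1 / (1 / (1 - c)) \<and> p_plus K n f x \<ge> real n powr (- C * real n)"
    using assms(3)
  proof eventually_elim
    case (elim n)
    show ?case
    proof (intro allI impI)
      fix f x
      assume x: "x \<in> bitstrings n \<and> \<not> optimal n f x"
      have "p_minus K n f x \<le> 1 - K n x x"
        using elim x by (intro p_minus_le_one_minus_stay) auto
      moreover have "real n powr (- C * real n) \<le> p_plus K n f x"
        using elim x by (intro p_plus_ge_min_transition) auto
      ultimately show "p_minus K n f x \<le> 1 / (1 / (1 - c)) \<and> real n powr (- C * real n) \<le> p_plus K n f x"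
        using elim x by force
    qed
  qed
qed

subsection \<open>Standard bit mutation\<close>

lemma mutation_kernel_sbm_prob:
  assumes "0 \<le> p" and "p \<le> 1"
  shows "mutation_kernel n (sbm_prob p n)"
proof -
  have "(\<Sum>y \<in> bitstrings n. sbm_prob p n x y) = 1" if "length x = n" for x
    using that
  proof (induction x arbitrary: n)
    case Nil
    then show ?case by (simp add: bitstrings_def sbm_prob_def hamming_def)
  next
    case (Cons a x)
    then obtain m where m: "n = Suc m" "length x = m" by auto
    have step: "sbm_prob p (Suc m) (a # x) (b # y) = (if a = b then 1 - p else p) * sbm_prob p m x y"
      for b y
    proof -
      have "Suc m - hamming x y = Suc (m - hamming x y)"
        using hamming_le_length[of x y] m(2) by simp
      then show ?thesis by (simp add: sbm_prob_def hamming_Cons)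
    qed
    have "(\<Sum>y \<in> bitstrings n. sbm_prob p n (a # x) y)
        = (\<Sum>y \<in> bitstrings m. sbm_prob p (Suc m) (a # x) (True # y))
          + (\<Sum>y \<in> bitstrings m. sbm_prob p (Suc m) (a # x) (False # y))"
      unfolding m bitstrings_Suc by (subst sum.union_disjoint) (auto simp: sum.reindex)
    also have "\<dots> = (1 - p) * (\<Sum>y \<in> bitstrings m. sbm_prob p m x y)
                      + p * (\<Sum>y \<in> bitstrings m. sbm_prob p m x y)"
      unfolding step by (cases a) (simp_all add: sum_distrib_left)
    also have "\<dots> = (\<Sum>y \<in> bitstrings m. sbm_prob p m x y)"
      by (simp add: algebra_simps)
    also have "\<dots> = 1"
      using Cons.IH m(2) by simp
    finally show ?case .
  qed
  then show ?thesis
    using assms by (simp add: mutation_kernel_def bitstrings_def sbm_prob_def)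
qed

lemma exp_le_one_minus_power:
  fixes t :: real
  assumes "0 \<le> t" and "t \<le> 1/2"
  shows "exp (- 2 * t * real n) \<le> (1 - t) ^ n"
proof -
  have "- t - 2 * t\<^sup>2 \<le> ln (1 - t)"
    using assms by (intro ln_one_minus_pos_lower_bound) auto
  moreover have "2 * t\<^sup>2 \<le> t"
    using assms mult_left_mono[of "2 * t" 1 t] by (simp add: power2_eq_square)
  ultimately have "exp (- 2 * t) \<le> exp (ln (1 - t))"
    by simp
  then have "exp (- 2 * t) \<le> 1 - t"
    using assms by simp
  then have "exp (- 2 * t) ^ n \<le> (1 - t) ^ n"
    by (intro power_mono) auto
  then show ?thesis
    by (simp add: exp_of_nat_mult[symmetric] mult.commute)
qed

lemma sbm_prob_self_ge_exp:
  assumes "0 \<le> t" and "t \<le> 1/2"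
  shows "exp (- 2 * t * real n) \<le> sbm_prob t n x x"
  using exp_le_one_minus_power[OF assms] by (simp add: sbm_prob_def)

lemma sbm_prob_ge_half_power:
  assumes "0 \<le> t" and "t \<le> 1/2" and "x \<in> bitstrings n"
  shows "(t / 2) ^ n \<le> sbm_prob t n x y"
proof -
  let ?h = "hamming x y"
  have h: "?h \<le> n"
    using hamming_le_length[of x y] assms(3) by (simp add: bitstrings_def)
  have "t ^ n \<le> t ^ ?h"
    using assms h by (intro power_decreasing) auto
  moreover have "(1 / 2) ^ n \<le> (1 - t) ^ (n - ?h)"
    using assms by (intro order_trans[OF power_mono power_decreasing]) auto
  ultimately have "t ^ n * (1 / 2) ^ n \<le> t ^ ?h * (1 - t) ^ (n - ?h)"
    using assms by (intro mult_mono) auto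
  then show ?thesis
    by (simp add: sbm_prob_def power_divide)
qed

lemma powr_neg_mult_le_half_power:
  fixes t d :: real
  assumes "2 \<le> real n" and "real n powr (- d) \<le> t"
  shows "real n powr (- (d + 1) * real n) \<le> (t / 2) ^ n"
proof -
  have n: "0 < real n"
    using assms(1) by simp
  have "real n powr (- (d + 1) * real n) = (real n powr (- d - 1)) ^ n"
    using n by (simp add: powr_powr[symmetric] powr_realpow)
  also have "\<dots> = (real n powr (- d) / real n) ^ n"
    using n by (simp add: powr_diff)
  also have "\<dots> \<le> (t / 2) ^ n"
    using assms n order_trans[OF powr_ge_zero assms(2)] by (intro power_mono frac_le) auto
  finally show ?thesis .
qed

lemma eventually_real_ge_at_top: "\<forall>\<^sub>F n in at_top. a \<le> real n"
  using filterlim_real_sequentially by (simp add: filterlim_at_top)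

lemma sbm_kernel_bounds:
  fixes p :: "nat \<Rightarrow> real"
  assumes p01: "\<forall>n. 0 \<le> p n \<and> p n \<le> 1" and "p \<in> O(\<lambda>n. 1 / real n)"
    and p_ge: "\<forall>\<^sub>F n in at_top. real n powr (- d) \<le> p n"
  obtains c where "0 < c" "c < 1"
    "\<forall>\<^sub>F n in at_top. mutation_kernel n (sbm_prob (p n) n) \<and>
       (\<forall>x \<in> bitstrings n. c \<le> sbm_prob (p n) n x x \<and>
          (\<forall>y \<in> bitstrings n. real n powr (- (d + 1) * real n) \<le> sbm_prob (p n) n x y))"
proof -
  obtain a where a: "0 < a" "\<forall>\<^sub>F n in at_top. norm (p n) \<le> a * norm (1 / real n)"
    using assms(2) by (elim landau_o.bigE)
  have "\<forall>\<^sub>F n in at_top. mutation_kernel n (sbm_prob (p n) n) \<and>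
          (\<forall>x \<in> bitstrings n. exp (- 2 * a) \<le> sbm_prob (p n) n x x \<and>
             (\<forall>y \<in> bitstrings n. real n powr (- (d + 1) * real n) \<le> sbm_prob (p n) n x y))"
    using a(2) p_ge eventually_real_ge_at_top[of "max 2 (2 * a)"]
  proof eventually_elim
    case (elim n)
    have n2: "2 \<le> real n" and na: "2 * a \<le> real n"
      using elim(3) by auto
    have p0: "0 \<le> p n"
      using p01 by simp
    have pn: "p n * real n \<le> a"
      using elim(1) p0 n2 by (simp add: field_simps)
    have p_half: "p n \<le> 1/2"
    proof -
      have "p n * real n * 2 \<le> real n"
        using pn na by linarith
      then show ?thesis
        using n2 by (simp add: field_simps)
    qed
    have "exp (- 2 * a) \<le> sbm_prob (p n) n x x" for x
    proof -
      have "exp (- 2 * a) \<le> exp (- 2 * p n * real n)"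
        using pn by simp
      also have "\<dots> \<le> sbm_prob (p n) n x x"
        using p0 p_half by (rule sbm_prob_self_ge_exp)
      finally show ?thesis .
    qed
    moreover have "real n powr (- (d + 1) * real n) \<le> sbm_prob (p n) n x y"
      if "x \<in> bitstrings n" for x y
      using powr_neg_mult_le_half_power[OF n2 elim(2)] sbm_prob_ge_half_power[OF p0 p_half that]
      by (rule order_trans)
    ultimately show ?case
      using p01 mutation_kernel_sbm_prob by simp
  qed
  moreover have "0 < exp (- 2 * a)" "exp (- 2 * a) < 1"
    using a(1) by auto
  ultimately show ?thesis
    using that by blast
qed

subsection \<open>Heavy-tailed mutation\<close>

lemma heavy_kernel_bounds:
  fixes \<beta> :: real
  assumes "1 < \<beta>"
  obtains c where "0 < c" "c < 1"
    "\<forall>\<^sub>F n in at_top. mutation_kernel n (heavy_prob \<beta> n) \<and>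
       (\<forall>x \<in> bitstrings n. c \<le> heavy_prob \<beta> n x x \<and>
          (\<forall>y \<in> bitstrings n. real n powr (- 3 * real n) \<le> heavy_prob \<beta> n x y))"
proof -
  define S where "S n = (\<Sum>j = 1..n div 2. real j powr (- \<beta>))" for n
  define B where "B = (\<Sum>j. real j powr (- \<beta>))"
  have "summable (\<lambda>j. real j powr (- \<beta>))"
    using assms by (subst summable_real_powr_iff) auto
  then have S_le_B: "S n \<le> B" for n
    unfolding S_def B_def by (intro sum_le_suminf) auto
  have S_ge_1: "1 \<le> S n" if "2 \<le> n" for n
  proof -
    have "real 1 powr (- \<beta>) \<le> S n"
      using that unfolding S_def by (intro member_le_sum) auto
    then show ?thesis by simp
  qed
  have S_le_n: "S n \<le> real n" for n
  proof -
    have "S n \<le> (\<Sum>j = 1..n div 2. 1)"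
      unfolding S_def
    proof (intro sum_mono)
      fix j assume "j \<in> {1..n div 2}"
      then have "1 \<le> real j powr \<beta>"
        using assms by (intro ge_one_powr_ge_zero) auto
      then show "real j powr (- \<beta>) \<le> 1"
        by (auto simp add: powr_minus_divide divide_le_eq_1)
    qed
    also have "\<dots> \<le> real n" by simp
    finally show ?thesis .
  qed
  have B_ge_1: "1 \<le> B"
    using S_ge_1[of 2] S_le_B[of 2] by simp
  have "\<forall>\<^sub>F n in at_top. mutation_kernel n (heavy_prob \<beta> n) \<and>
          (\<forall>x \<in> bitstrings n. exp (- 2) / B \<le> heavy_prob \<beta> n x x \<and>
             (\<forall>y \<in> bitstrings n. real n powr (- 3 * real n) \<le> heavy_prob \<beta> n x y))"
    using eventually_ge_at_top[of "2::nat"]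
  proof eventually_elim
    case (elim n)
    define w where "w i = real i powr (- \<beta>) / S n" for i
    define M where "M i = sbm_prob (real i / real n) n" for i
    have S_pos: "0 < S n" and n2: "2 \<le> real n"
      using S_ge_1[OF elim] elim by auto
    have heavy_eq: "heavy_prob \<beta> n = (\<lambda>x y. \<Sum>i = 1..n div 2. w i * M i x y)"
      by (simp add: heavy_prob_def w_def M_def S_def fun_eq_iff)
    have rates: "0 \<le> real i / real n \<and> real i / real n \<le> 1" if "i \<in> {1..n div 2}" for i
      using that by (auto simp: field_simps)
    have M_kernel: "mutation_kernel n (M i)" if "i \<in> {1..n div 2}" for i
      using rates[OF that] unfolding M_def by (intro mutation_kernel_sbm_prob) auto
    have w_nonneg: "0 \<le> w i" for i
      using S_pos by (simp add: w_def)
    have kernel: "mutation_kernel n (heavy_prob \<beta> n)"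
      unfolding heavy_eq using S_pos w_nonneg M_kernel
      by (intro mutation_kernel_mixture) (auto simp: w_def S_def sum_divide_distrib[symmetric])
    have first: "M 1 x y / S n \<le> heavy_prob \<beta> n x y" if "x \<in> bitstrings n" "y \<in> bitstrings n" for x y
    proof -
      have "w 1 * M 1 x y \<le> heavy_prob \<beta> n x y"
        unfolding heavy_eq using elim w_nonneg M_kernel that
        by (intro mixture_ge_component) (auto simp: mutation_kernel_def)
      then show ?thesis by (simp add: w_def)
    qed
    have rate_1: "0 \<le> 1 / real n" "1 / real n \<le> 1/2"
      using n2 by auto
    have stay: "exp (- 2) / B \<le> heavy_prob \<beta> n x x" if "x \<in> bitstrings n" for x
    proof -
      have "exp (- 2) / B \<le> exp (- 2) / S n"
        using S_pos S_le_B[of n] B_ge_1 by (intro divide_left_mono) auto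
      also have "\<dots> \<le> M 1 x x / S n"
        using sbm_prob_self_ge_exp[OF rate_1, of n x] n2 S_pos
        by (intro divide_right_mono) (auto simp: M_def)
      also have "\<dots> \<le> heavy_prob \<beta> n x x"
        using first that by blast
      finally show ?thesis .
    qed
    have reach: "real n powr (- 3 * real n) \<le> heavy_prob \<beta> n x y"
      if "x \<in> bitstrings n" "y \<in> bitstrings n" for x y
    proof -
      have "real n powr (- 2 * real n) \<le> (1 / real n / 2) ^ n"
        using powr_neg_mult_le_half_power[of n 1 "1 / real n"] n2 by (simp add: powr_minus_divide)
      also have "\<dots> \<le> M 1 x y"
        unfolding M_def using sbm_prob_ge_half_power[OF rate_1 that(1)] by simp
      finally have M_ge: "real n powr (- 2 * real n) \<le> M 1 x y" .
      then have "real n powr (- 2 * real n) / real n \<le> M 1 x y / S n"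
        using S_pos S_le_n[of n] order_trans[OF powr_ge_zero M_ge] by (intro frac_le) auto
      moreover have "real n powr (- 3 * real n) \<le> real n powr (- 2 * real n) / real n"
      proof -
        have "real n powr (- 3 * real n) \<le> real n powr (- 2 * real n - 1)"
          using n2 by (intro powr_mono) auto
        also have "\<dots> = real n powr (- 2 * real n) / real n"
          using n2 by (simp add: powr_diff)
        finally show ?thesis .
      qed
      ultimately show ?thesis
        using first that by (meson order_trans)
    qed
    show ?case
      using kernel stay reach by blast
  qed
  moreover have "0 < exp (- 2) / B" "exp (- 2) / B < 1"
    using B_ge_1 by (auto simp: field_simps intro: less_le_trans[of _ 1])
  ultimately show ?thesis
    using that by blast
qed

theorem lemma2p3:
  fixes K :: "nat \<Rightarrow> bool list \<Rightarrow> bool list \<Rightarrow> real"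
  assumes "(\<exists>p :: nat \<Rightarrow> real.
              (\<forall>n. 0 \<le> p n \<and> p n \<le> 1) \<and>
              p \<in> O(\<lambda>n. 1 / real n) \<and>
              (\<exists>d. \<forall>\<^sub>F n in at_top. p n \<ge> real n powr (-d)) \<and>
              K = (\<lambda>n. sbm_prob (p n) n))
         \<or> (\<exists>\<beta> :: real. \<beta> > 1 \<and> K = heavy_prob \<beta>)"
  shows "\<exists>\<gamma> > 1. \<exists>C. \<forall>\<^sub>F n in at_top. \<forall>(f :: bool list \<Rightarrow> real) x.
           x \<in> bitstrings n \<and> \<not> optimal n f x \<longrightarrow>
             p_minus K n f x \<le> 1 / \<gamma> \<and> p_plus K n f x \<ge> real n powr (- C * real n)"
  using assms
proof (elim disjE exE conjE)
  fix p d
  assume "\<forall>n. 0 \<le> p n \<and> p n \<le> 1" "p \<in> O(\<lambda>n. 1 / real n)"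
    "\<forall>\<^sub>F n in at_top. real n powr (- d) \<le> p n" "K = (\<lambda>n. sbm_prob (p n) n)"
  then obtain c where "0 < c" "c < 1"
    "\<forall>\<^sub>F n in at_top. mutation_kernel n (K n) \<and>
       (\<forall>x \<in> bitstrings n. c \<le> K n x x \<and>
          (\<forall>y \<in> bitstrings n. real n powr (- (d + 1) * real n) \<le> K n x y))"
    by (elim sbm_kernel_bounds) auto
  then show ?thesis
    by (rule drift_bounds_from_kernel_bounds)
next
  fix \<beta> :: real
  assume "1 < \<beta>" "K = heavy_prob \<beta>"
  then obtain c where "0 < c" "c < 1"
    "\<forall>\<^sub>F n in at_top. mutation_kernel n (K n) \<and>
       (\<forall>x \<in> bitstrings n. c \<le> K n x x \<and>
          (\<forall>y \<in> bitstrings n. real n powr (- 3 * real n) \<le> K n x y))"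
    by (elim heavy_kernel_bounds) auto
  then show ?thesis
    by (rule drift_bounds_from_kernel_bounds)
qed

end
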